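(* The variety $\mathsf{V}(S_{(4,459)})$ is the ai-semiring variety defined by the identities $x^2y\approx xy$; $xyz\approx xzy$; $xy\approx xy+x$; $x+yxz\approx yxz+xzy$, $x+xz\approx xz$, $x+yx\approx yx+xy$; and $x_1x_2+x_3x_4\approx x_1x_2+x_3x_4+x_1x_2x_3x_4$.
   Context: An ai-semiring is an algebra $(S,+,\cdot)$ with $(S,+)$ a semilattice, $(S,\cdot)$ a semigroup, and both distributive laws. $\mathsf{V}(S)$ is the variety generated by $S$; "the ai-semiring variety defined by identities $\Sigma$" is the class of all ai-semirings satisfying $\Sigma$. $S_{(4,459)}$ has carrier $\{1,2,3,4\}$; addition: $x+x=x$, $2+x=x$, $1+x=1$ for all $x$, $3+4=1$; multiplication (row $a$, column $b$ gives $a\cdot b$): row $1$: $1,1,1,1$; row $2$: $3,2,3,3$; row $3$: $3,3,3,3$; row $4$: $1,1,1,1$. *)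

theory Defs
  imports Main
begin

datatype trm = V nat | Pl trm trm | Tm trm trm

fun eval :: "('a \<Rightarrow> 'a \<Rightarrow> 'a) \<Rightarrow> ('a \<Rightarrow> 'a \<Rightarrow> 'a) \<Rightarrow> (nat \<Rightarrow> 'a) \<Rightarrow> trm \<Rightarrow> 'a" where
  "eval ad mu \<rho> (V i) = \<rho> i"
| "eval ad mu \<rho> (Pl s t) = ad (eval ad mu \<rho> s) (eval ad mu \<rho> t)"
| "eval ad mu \<rho> (Tm s t) = mu (eval ad mu \<rho> s) (eval ad mu \<rho> t)"

definition closed_alg :: "'a set \<Rightarrow> ('a \<Rightarrow> 'a \<Rightarrow> 'a) \<Rightarrow> ('a \<Rightarrow> 'a \<Rightarrow> 'a) \<Rightarrow> bool" where
  "closed_alg A ad mu \<longleftrightarrow> (\<forall>x\<in>A. \<forall>y\<in>A. ad x y \<in> A \<and> mu x y \<in> A)"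

definition ai_semiring :: "'a set \<Rightarrow> ('a \<Rightarrow> 'a \<Rightarrow> 'a) \<Rightarrow> ('a \<Rightarrow> 'a \<Rightarrow> 'a) \<Rightarrow> bool" where
  "ai_semiring A ad mu \<longleftrightarrow> closed_alg A ad mu \<and>
     (\<forall>x\<in>A. \<forall>y\<in>A. \<forall>z\<in>A.
        ad (ad x y) z = ad x (ad y z) \<and> ad x y = ad y x \<and> ad x x = x \<and>
        mu (mu x y) z = mu x (mu y z) \<and>
        mu x (ad y z) = ad (mu x y) (mu x z) \<and> mu (ad y z) x = ad (mu y x) (mu z x))"

definition sat :: "'a set \<Rightarrow> ('a \<Rightarrow> 'a \<Rightarrow> 'a) \<Rightarrow> ('a \<Rightarrow> 'a \<Rightarrow> 'a) \<Rightarrow> trm \<Rightarrow> trm \<Rightarrow> bool" where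
  "sat A ad mu p q \<longleftrightarrow> (\<forall>\<rho>. (\<forall>i. \<rho> i \<in> A) \<longrightarrow> eval ad mu \<rho> p = eval ad mu \<rho> q)"

definition S_car :: "nat set" where "S_car = {1,2,3,4}"

definition S_add :: "nat \<Rightarrow> nat \<Rightarrow> nat" where
  "S_add a b = (if a = b then a else if a = 2 then b else if b = 2 then a else 1)"

definition S_mul :: "nat \<Rightarrow> nat \<Rightarrow> nat" where
  "S_mul a b = (if a = 1 \<or> a = 4 then 1 else if a = 3 then 3 else if b = 2 then 2 else 3)"

text \<open>Membership in the variety V(S) generated by S: by Birkhoff's HSP theorem, V(S) is
  the class of all algebras of the signature satisfying every identity that holds in S.\<close>
definition in_VS :: "'a set \<Rightarrow> ('a \<Rightarrow> 'a \<Rightarrow> 'a) \<Rightarrow> ('a \<Rightarrow> 'a \<Rightarrow> 'a) \<Rightarrow> bool" where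
  "in_VS A ad mu \<longleftrightarrow> closed_alg A ad mu \<and>
     (\<forall>p q. sat S_car S_add S_mul p q \<longrightarrow> sat A ad mu p q)"

abbreviation "x1 \<equiv> V 1"
abbreviation "x2 \<equiv> V 2"
abbreviation "x3 \<equiv> V 3"
abbreviation "x4 \<equiv> V 4"
abbreviation "vx \<equiv> V 0"
abbreviation "vy \<equiv> V 5"
abbreviation "vz \<equiv> V 6"

text \<open>The identities of the proposition (products are left-associated; associativity
  makes this immaterial in ai-semirings).\<close>
definition Sigma_ids :: "(trm \<times> trm) set" where
  "Sigma_ids = {
     (Tm (Tm vx vx) vy, Tm vx vy),
     (Tm (Tm vx vy) vz, Tm (Tm vx vz) vy),
     (Tm vx vy, Pl (Tm vx vy) vx),
     (Pl vx (Tm (Tm vy vx) vz), Pl (Tm (Tm vy vx) vz) (Tm (Tm vx vz) vy)),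
     (Pl vx (Tm vx vz), Tm vx vz),
     (Pl vx (Tm vy vx), Pl (Tm vy vx) (Tm vx vy)),
     (Pl (Tm x1 x2) (Tm x3 x4), Pl (Pl (Tm x1 x2) (Tm x3 x4)) (Tm (Tm (Tm x1 x2) x3) x4))}"

end

theory Submission
  imports Defs
begin

text \<open>Modulo the ai-semiring axioms a term is a sum of variables and of products. Its shape
  records three sets of variables: the lead variables (heads of product summands, and summands
  that also occur in some product summand), the variables occurring in product summands, and
  the lone summands (summands occurring in no product summand).

  Evaluating a term in S_(4,459) at the valuation sending v to 4 and every other variable to 2
  gives 1, 3, 4 or 2 according as v is a lead variable, occurs in a product summand without
  being lead, is a lone summand, or does not occur at all. So every identity of S_(4,459)
  relates terms of the same shape.

  Conversely, in an ai-semiring satisfying \<Sigma> the value of a term t is, in the semilattice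
  order, the join of its lone summands and of all products h j with h lead and j occurring in
  a product summand of t. Both inequalities are proved by structural induction; the crucial
  step, that a b \<le> t and c d \<le> t give a d \<le> t, comes from the identity
  x1 x2 + x3 x4 \<approx> x1 x2 + x3 x4 + x1 x2 x3 x4. Hence the value depends only on the shape,
  and every identity of S_(4,459) holds in every model of \<Sigma>.\<close>

lemma satD: "sat A ad mu p q \<Longrightarrow> (\<And>i. \<rho> i \<in> A) \<Longrightarrow> eval ad mu \<rho> p = eval ad mu \<rho> q"
  unfolding sat_def by blast

definition ai_semiring_ids :: "(trm \<times> trm) set" where
  "ai_semiring_ids = {
     (Pl (Pl vx vy) vz, Pl vx (Pl vy vz)),
     (Pl vx vy, Pl vy vx),
     (Pl vx vx, vx),
     (Tm (Tm vx vy) vz, Tm vx (Tm vy vz)),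
     (Tm vx (Pl vy vz), Pl (Tm vx vy) (Tm vx vz)),
     (Tm (Pl vy vz) vx, Pl (Tm vy vx) (Tm vz vx))}"

lemma ai_semiring_iff_sat_ai_semiring_ids:
  "ai_semiring A ad mu \<longleftrightarrow> closed_alg A ad mu \<and> (\<forall>(p, q) \<in> ai_semiring_ids. sat A ad mu p q)"
proof
  assume ai: "ai_semiring A ad mu"
  then have "closed_alg A ad mu"
    by (simp add: ai_semiring_def)
  moreover have "sat A ad mu p q" if "(p, q) \<in> ai_semiring_ids" for p q
    unfolding sat_def
  proof (intro allI impI)
    fix \<rho> :: "nat \<Rightarrow> 'a"
    assume "\<forall>i. \<rho> i \<in> A"
    then show "eval ad mu \<rho> p = eval ad mu \<rho> q"
      using ai[unfolded ai_semiring_def, THEN conjunct2, rule_format, of "\<rho> 0" "\<rho> 5" "\<rho> 6"] that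
      unfolding ai_semiring_ids_def by (elim insertE emptyE; clarify; simp only: eval.simps)
  qed
  ultimately show "closed_alg A ad mu \<and> (\<forall>(p, q) \<in> ai_semiring_ids. sat A ad mu p q)"
    by blast
next
  assume sat: "closed_alg A ad mu \<and> (\<forall>(p, q) \<in> ai_semiring_ids. sat A ad mu p q)"
  show "ai_semiring A ad mu"
    unfolding ai_semiring_def
  proof (intro conjI ballI)
    fix x y z
    assume "x \<in> A" "y \<in> A" "z \<in> A"
    define \<rho> where "\<rho> i = (if i = 0 then x else if i = 5 then y else z)" for i :: nat
    have axiom_instance: "eval ad mu \<rho> p = eval ad mu \<rho> q" if "(p, q) \<in> ai_semiring_ids" for p q
      using sat that \<open>x \<in> A\<close> \<open>y \<in> A\<close> \<open>z \<in> A\<close> by (auto intro: satD simp: \<rho>_def)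
    show "ad (ad x y) z = ad x (ad y z)"
      using axiom_instance[of "Pl (Pl vx vy) vz" "Pl vx (Pl vy vz)"] by (simp add: ai_semiring_ids_def \<rho>_def)
    show "ad x y = ad y x"
      using axiom_instance[of "Pl vx vy" "Pl vy vx"] by (simp add: ai_semiring_ids_def \<rho>_def)
    show "ad x x = x"
      using axiom_instance[of "Pl vx vx" vx] by (simp add: ai_semiring_ids_def \<rho>_def)
    show "mu (mu x y) z = mu x (mu y z)"
      using axiom_instance[of "Tm (Tm vx vy) vz" "Tm vx (Tm vy vz)"] by (simp add: ai_semiring_ids_def \<rho>_def)
    show "mu x (ad y z) = ad (mu x y) (mu x z)"
      using axiom_instance[of "Tm vx (Pl vy vz)" "Pl (Tm vx vy) (Tm vx vz)"] by (simp add: ai_semiring_ids_def \<rho>_def)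
    show "mu (ad y z) x = ad (mu y x) (mu z x)"
      using axiom_instance[of "Tm (Pl vy vz) vx" "Pl (Tm vy vx) (Tm vz vx)"] by (simp add: ai_semiring_ids_def \<rho>_def)
  qed (use sat in blast)
qed

lemma S_ai_semiring: "ai_semiring S_car S_add S_mul"
  unfolding ai_semiring_def closed_alg_def S_car_def
  by (simp add: S_add_def S_mul_def)

lemma S_Sigma_laws:
  assumes "a \<in> S_car" "b \<in> S_car" "c \<in> S_car"
  shows "S_mul (S_mul a a) b = S_mul a b"
    and "S_mul (S_mul a b) c = S_mul (S_mul a c) b"
    and "S_mul a b = S_add (S_mul a b) a"
    and "S_add a (S_mul (S_mul b a) c) = S_add (S_mul (S_mul b a) c) (S_mul (S_mul a c) b)"
    and "S_add a (S_mul a c) = S_mul a c"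
    and "S_add a (S_mul b a) = S_add (S_mul b a) (S_mul a b)"
  using assms unfolding S_car_def
  by (auto simp: S_add_def S_mul_def)

lemma S_Sigma_prod_law:
  assumes "a \<in> S_car" "b \<in> S_car" "c \<in> S_car" "d \<in> S_car"
  shows "S_add (S_mul a b) (S_mul c d) =
           S_add (S_add (S_mul a b) (S_mul c d)) (S_mul (S_mul (S_mul a b) c) d)"
  using assms unfolding S_car_def
  by (auto simp: S_add_def S_mul_def)

lemma S_sat_Sigma_ids:
  assumes "(p, q) \<in> Sigma_ids"
  shows "sat S_car S_add S_mul p q"
  unfolding sat_def
proof (intro allI impI)
  fix \<rho> :: "nat \<Rightarrow> nat"
  assume "\<forall>i. \<rho> i \<in> S_car"
  then show "eval S_add S_mul \<rho> p = eval S_add S_mul \<rho> q"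
    using assms S_Sigma_laws[of "\<rho> 0" "\<rho> 5" "\<rho> 6"] S_Sigma_prod_law[of "\<rho> 1" "\<rho> 2" "\<rho> 3" "\<rho> 4"]
    unfolding Sigma_ids_def by auto
qed

fun sum_vars :: "trm \<Rightarrow> nat set" where
  "sum_vars (V i) = {i}"
| "sum_vars (Pl s t) = sum_vars s \<union> sum_vars t"
| "sum_vars (Tm s t) = {}"

fun vars :: "trm \<Rightarrow> nat set" where
  "vars (V i) = {i}"
| "vars (Pl s t) = vars s \<union> vars t"
| "vars (Tm s t) = vars s \<union> vars t"

fun head_vars :: "trm \<Rightarrow> nat set" where
  "head_vars (V i) = {i}"
| "head_vars (Pl s t) = head_vars s \<union> head_vars t"
| "head_vars (Tm s t) = head_vars s"

fun prod_heads :: "trm \<Rightarrow> nat set" where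
  "prod_heads (V i) = {}"
| "prod_heads (Pl s t) = prod_heads s \<union> prod_heads t"
| "prod_heads (Tm s t) = head_vars s"

fun prod_vars :: "trm \<Rightarrow> nat set" where
  "prod_vars (V i) = {}"
| "prod_vars (Pl s t) = prod_vars s \<union> prod_vars t"
| "prod_vars (Tm s t) = vars s \<union> vars t"

definition lead_vars :: "trm \<Rightarrow> nat set" where
  "lead_vars t = prod_heads t \<union> (sum_vars t \<inter> prod_vars t)"

definition shape :: "trm \<Rightarrow> nat set \<times> nat set \<times> nat set" where
  "shape t = (lead_vars t, prod_vars t, sum_vars t - prod_vars t)"

definition shape_leq :: "trm \<Rightarrow> trm \<Rightarrow> bool" where
  "shape_leq q p \<longleftrightarrow> prod_vars q \<subseteq> prod_vars p \<and> prod_heads q \<subseteq> lead_vars p \<and>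
     sum_vars q \<inter> prod_vars p \<subseteq> lead_vars p \<and> sum_vars q - prod_vars p \<subseteq> sum_vars p"

lemma head_vars_subset_vars: "head_vars t \<subseteq> vars t"
  by (induction t) auto

lemma prod_heads_subset_prod_vars: "prod_heads t \<subseteq> prod_vars t"
  using head_vars_subset_vars by (induction t) auto

lemma head_vars_eq: "head_vars t = prod_heads t \<union> sum_vars t"
  by (induction t) auto

lemma vars_eq: "vars t = prod_vars t \<union> sum_vars t"
  by (induction t) auto

lemma lead_vars_subset_prod_vars: "lead_vars t \<subseteq> prod_vars t"
  using prod_heads_subset_prod_vars by (auto simp: lead_vars_def)

definition S_code :: "bool \<Rightarrow> bool \<Rightarrow> bool \<Rightarrow> nat" where
  "S_code a b c = (if a \<or> (b \<and> c) then 1 else if b then 3 else if c then 4 else 2)"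

lemma S_add_code: "(a1 \<longrightarrow> b1) \<Longrightarrow> (a2 \<longrightarrow> b2) \<Longrightarrow>
  S_add (S_code a1 b1 c1) (S_code a2 b2 c2) = S_code (a1 \<or> a2) (b1 \<or> b2) (c1 \<or> c2)"
  by (cases a1; cases b1; cases c1; cases a2; cases b2; cases c2) (simp_all add: S_add_def S_code_def)

lemma S_mul_code: "(a1 \<longrightarrow> b1) \<Longrightarrow> (a2 \<longrightarrow> b2) \<Longrightarrow>
  S_mul (S_code a1 b1 c1) (S_code a2 b2 c2) = S_code (a1 \<or> c1) (b1 \<or> c1 \<or> b2 \<or> c2) False"
  by (cases a1; cases b1; cases c1; cases a2; cases b2; cases c2) (simp_all add: S_mul_def S_code_def)

lemma S_code_eq_iff: "(a \<longrightarrow> b) \<Longrightarrow> (a' \<longrightarrow> b') \<Longrightarrow> S_code a b c = S_code a' b' c' \<longleftrightarrow>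
  (a \<or> b \<and> c \<longleftrightarrow> a' \<or> b' \<and> c') \<and> (b \<longleftrightarrow> b') \<and> (c \<and> \<not> b \<longleftrightarrow> c' \<and> \<not> b')"
  by (cases a; cases b; cases c; cases a'; cases b'; cases c') (simp_all add: S_code_def)

lemma eval_S_point:
  "eval S_add S_mul (\<lambda>i. if i = v then 4 else 2) t =
     S_code (v \<in> prod_heads t) (v \<in> prod_vars t) (v \<in> sum_vars t)"
proof (induction t)
  case (V i)
  then show ?case by (simp add: S_code_def)
next
  case (Pl s t)
  then show ?case
    using prod_heads_subset_prod_vars by (simp add: S_add_code subset_iff)
next
  case (Tm s t)
  then show ?case
    using prod_heads_subset_prod_vars by (simp add: S_mul_code subset_iff head_vars_eq vars_eq)
qed

lemma shape_eq_if_sat_S: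
  assumes "sat S_car S_add S_mul p q"
  shows "shape p = shape q"
proof -
  have "(v \<in> lead_vars p \<longleftrightarrow> v \<in> lead_vars q) \<and> (v \<in> prod_vars p \<longleftrightarrow> v \<in> prod_vars q) \<and>
        (v \<in> sum_vars p - prod_vars p \<longleftrightarrow> v \<in> sum_vars q - prod_vars q)" for v
  proof -
    have "eval S_add S_mul (\<lambda>i. if i = v then 4 else 2) p = eval S_add S_mul (\<lambda>i. if i = v then 4 else 2) q"
      using assms by (rule satD) (simp add: S_car_def)
    moreover have "v \<in> prod_heads u \<longrightarrow> v \<in> prod_vars u" for u
      using prod_heads_subset_prod_vars by blast
    ultimately show ?thesis
      by (auto simp: eval_S_point S_code_eq_iff lead_vars_def)
  qed
  then show ?thesis
    unfolding shape_def by blast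
qed

locale ai_semiring_on =
  fixes A :: "'a set" and ad mu :: "'a \<Rightarrow> 'a \<Rightarrow> 'a"
  assumes add_closed [simp]: "x \<in> A \<Longrightarrow> y \<in> A \<Longrightarrow> ad x y \<in> A"
    and mul_closed [simp]: "x \<in> A \<Longrightarrow> y \<in> A \<Longrightarrow> mu x y \<in> A"
    and add_assoc: "x \<in> A \<Longrightarrow> y \<in> A \<Longrightarrow> z \<in> A \<Longrightarrow> ad (ad x y) z = ad x (ad y z)"
    and add_commute: "x \<in> A \<Longrightarrow> y \<in> A \<Longrightarrow> ad x y = ad y x"
    and add_idem: "x \<in> A \<Longrightarrow> ad x x = x"
    and mul_assoc: "x \<in> A \<Longrightarrow> y \<in> A \<Longrightarrow> z \<in> A \<Longrightarrow> mu (mu x y) z = mu x (mu y z)"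
    and distrib_left: "x \<in> A \<Longrightarrow> y \<in> A \<Longrightarrow> z \<in> A \<Longrightarrow> mu x (ad y z) = ad (mu x y) (mu x z)"
    and distrib_right: "x \<in> A \<Longrightarrow> y \<in> A \<Longrightarrow> z \<in> A \<Longrightarrow> mu (ad y z) x = ad (mu y x) (mu z x)"

lemma ai_semiring_on_iff: "ai_semiring_on A ad mu \<longleftrightarrow> ai_semiring A ad mu"
proof
  assume "ai_semiring_on A ad mu"
  then interpret ai_semiring_on A ad mu .
  show "ai_semiring A ad mu"
    unfolding ai_semiring_def closed_alg_def
    by (auto simp: add_assoc add_idem mul_assoc distrib_left distrib_right intro: add_commute)
next
  assume "ai_semiring A ad mu"
  then show "ai_semiring_on A ad mu"
    unfolding ai_semiring_def closed_alg_def by unfold_locales blast+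
qed

context ai_semiring_on
begin

definition leq :: "'a \<Rightarrow> 'a \<Rightarrow> bool" (infix "\<preceq>" 50) where
  "x \<preceq> y \<longleftrightarrow> ad x y = y"

lemma leq_refl: "x \<in> A \<Longrightarrow> x \<preceq> x"
  by (simp add: leq_def add_idem)

lemma leq_trans: "x \<in> A \<Longrightarrow> y \<in> A \<Longrightarrow> z \<in> A \<Longrightarrow> x \<preceq> y \<Longrightarrow> y \<preceq> z \<Longrightarrow> x \<preceq> z"
  unfolding leq_def by (metis add_assoc)

lemma leq_antisym: "x \<in> A \<Longrightarrow> y \<in> A \<Longrightarrow> x \<preceq> y \<Longrightarrow> y \<preceq> x \<Longrightarrow> x = y"
  unfolding leq_def by (metis add_commute)

lemma add_upper1: "x \<in> A \<Longrightarrow> y \<in> A \<Longrightarrow> x \<preceq> ad x y"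
  by (simp add: leq_def add_assoc[symmetric] add_idem)

lemma add_upper2: "x \<in> A \<Longrightarrow> y \<in> A \<Longrightarrow> y \<preceq> ad x y"
  using add_upper1[of y x] by (simp add: add_commute[of x y])

lemma add_leqI: "x \<in> A \<Longrightarrow> y \<in> A \<Longrightarrow> z \<in> A \<Longrightarrow> x \<preceq> z \<Longrightarrow> y \<preceq> z \<Longrightarrow> ad x y \<preceq> z"
  unfolding leq_def by (metis add_assoc)

lemma leq_add1: "x \<in> A \<Longrightarrow> y \<in> A \<Longrightarrow> z \<in> A \<Longrightarrow> x \<preceq> y \<Longrightarrow> x \<preceq> ad y z"
  by (rule leq_trans[OF _ _ _ _ add_upper1]) simp_all

lemma leq_add2: "x \<in> A \<Longrightarrow> y \<in> A \<Longrightarrow> z \<in> A \<Longrightarrow> x \<preceq> z \<Longrightarrow> x \<preceq> ad y z"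
  by (rule leq_trans[OF _ _ _ _ add_upper2]) simp_all

end

text \<open>The identities x + yxz \<approx> yxz + xzy and x + xz \<approx> xz of \<Sigma> are not assumed:
  they follow from the other five, since every identity of S_(4,459) holds in this locale.\<close>

locale sigma_model = ai_semiring_on +
  assumes mul_idem_left: "x \<in> A \<Longrightarrow> y \<in> A \<Longrightarrow> mu (mu x x) y = mu x y"
    and mul_right_commute: "x \<in> A \<Longrightarrow> y \<in> A \<Longrightarrow> z \<in> A \<Longrightarrow> mu (mu x y) z = mu (mu x z) y"
    and mul_absorb: "x \<in> A \<Longrightarrow> y \<in> A \<Longrightarrow> mu x y = ad (mu x y) x"
    and add_mul_swap: "x \<in> A \<Longrightarrow> y \<in> A \<Longrightarrow> ad x (mu y x) = ad (mu y x) (mu x y)"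
    and add_prod_absorb: "a \<in> A \<Longrightarrow> b \<in> A \<Longrightarrow> c \<in> A \<Longrightarrow> d \<in> A \<Longrightarrow>
      ad (mu a b) (mu c d) = ad (ad (mu a b) (mu c d)) (mu (mu (mu a b) c) d)"
begin

lemma leq_mul: "x \<in> A \<Longrightarrow> y \<in> A \<Longrightarrow> x \<preceq> mu x y"
  using mul_absorb[of x y] add_commute[of x "mu x y"] by (simp add: leq_def)

lemma mul_self_leq: "x \<in> A \<Longrightarrow> y \<in> A \<Longrightarrow> mu x x \<preceq> mu x y"
  using leq_mul[of "mu x x" y] by (simp add: mul_idem_left)

lemma prod_leq_add_prod:
  "a \<in> A \<Longrightarrow> b \<in> A \<Longrightarrow> c \<in> A \<Longrightarrow> d \<in> A \<Longrightarrow> mu (mu (mu a b) c) d \<preceq> ad (mu a b) (mu c d)"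
  using add_prod_absorb[of a b c d] add_commute[of "mu (mu (mu a b) c) d" "ad (mu a b) (mu c d)"]
  by (simp add: leq_def)

lemma mul_mul_leq_add: "x \<in> A \<Longrightarrow> a \<in> A \<Longrightarrow> b \<in> A \<Longrightarrow> mu (mu x a) b \<preceq> ad (mu x a) (mu x b)"
  using prod_leq_add_prod[of x a x b] by (simp add: mul_right_commute[of x a x] mul_idem_left)

text \<open>h j \<preceq> h j k k' = h k k' j \<preceq> h k + k' j \<preceq> X.\<close>

lemma mul_leq_splice:
  assumes "h \<in> A" "k \<in> A" "k' \<in> A" "j \<in> A" "X \<in> A"
    and "mu h k \<preceq> X" "mu k' j \<preceq> X"
  shows "mu h j \<preceq> X"
proof -
  have "mu (mu (mu h k) k') j = mu (mu (mu h j) k) k'"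
    using assms by (simp add: mul_right_commute[of h j k] mul_right_commute[of "mu h k" j k'])
  also have "\<dots> = mu (mu h j) (mu k k')"
    using assms by (simp add: mul_assoc)
  finally have 1: "mu h j \<preceq> mu (mu (mu h k) k') j"
    using assms by (simp add: leq_mul)
  have 2: "mu (mu (mu h k) k') j \<preceq> ad (mu h k) (mu k' j)"
    using assms by (simp add: prod_leq_add_prod)
  have 3: "ad (mu h k) (mu k' j) \<preceq> X"
    using assms by (simp add: add_leqI)
  have 4: "mu (mu (mu h k) k') j \<preceq> X"
    by (rule leq_trans[OF _ _ _ 2 3]) (simp_all add: assms)
  show ?thesis
    by (rule leq_trans[OF _ _ _ 1 4]) (simp_all add: assms)
qed

lemma mul_swap_leq:
  assumes "x \<in> A" "y \<in> A" "X \<in> A" and "x \<preceq> X" "mu y x \<preceq> X"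
  shows "mu x y \<preceq> X"
proof -
  have "mu x y \<preceq> ad (mu y x) (mu x y)"
    using assms by (simp add: add_upper2)
  also have "\<dots> = ad x (mu y x)"
    using assms by (simp add: add_mul_swap)
  finally have "mu x y \<preceq> ad x (mu y x)" .
  moreover have "ad x (mu y x) \<preceq> X"
    using assms by (simp add: add_leqI)
  ultimately show ?thesis
    by (rule leq_trans[rotated 3]) (simp_all add: assms)
qed

context
  fixes \<rho> :: "nat \<Rightarrow> 'a"
  assumes rho_in_A [simp]: "\<And>i. \<rho> i \<in> A"
begin

abbreviation val :: "trm \<Rightarrow> 'a" where
  "val t \<equiv> eval ad mu \<rho> t"

lemma eval_in_A [simp]: "val t \<in> A"
  by (induction t) simp_all

lemma sum_var_leq_val: "i \<in> sum_vars p \<Longrightarrow> \<rho> i \<preceq> val p"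
proof (induction p)
  case (Pl s t)
  then show ?case
    by (auto simp: leq_add1 leq_add2)
qed (simp_all add: leq_refl)

lemma mul_var_leq_mul_val: "j \<in> vars t \<Longrightarrow> x \<in> A \<Longrightarrow> mu x (\<rho> j) \<preceq> mu x (val t)"
proof (induction t arbitrary: x)
  case (V i)
  then show ?case
    by (simp add: leq_refl)
next
  case (Pl s t)
  then show ?case
    by (auto simp: distrib_left leq_add1 leq_add2)
next
  case (Tm s t)
  have "mu x (\<rho> j) \<preceq> mu (mu x (val s)) (val t)"
  proof (cases "j \<in> vars s")
    case True
    show ?thesis
      by (rule leq_trans[OF _ _ _ Tm.IH(1)[OF True Tm.prems(2)]])
        (simp_all add: Tm.prems leq_mul)
  next
    case False
    then have "j \<in> vars t"
      using Tm.prems(1) by simp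
    show ?thesis
      by (rule leq_trans[OF _ _ _ Tm.IH(2)[OF \<open>j \<in> vars t\<close> Tm.prems(2)]])
        (simp_all add: Tm.prems leq_mul mul_right_commute[of x "val s"])
  qed
  then show ?case
    using Tm.prems by (simp add: mul_assoc)
qed

lemma head_square_leq_val_mul:
  "h \<in> head_vars s \<Longrightarrow> y \<in> A \<Longrightarrow> mu (\<rho> h) (\<rho> h) \<preceq> mu (val s) y"
proof (induction s arbitrary: y)
  case (V i)
  then show ?case
    by (simp add: mul_self_leq)
next
  case (Pl s t)
  then show ?case
    by (auto simp: distrib_right leq_add1 leq_add2)
next
  case (Tm s t)
  then show ?case
    by (simp add: mul_assoc)
qed

lemma var_mul_leq_val_mul:
  "j \<in> vars s \<union> vars t \<Longrightarrow> \<exists>k. mu (\<rho> k) (\<rho> j) \<preceq> mu (val s) (val t)"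
proof (induction s arbitrary: t)
  case (V i)
  show ?case
  proof (cases "j = i")
    case True
    then show ?thesis
      using mul_self_leq[of "\<rho> i" "val t"] by auto
  next
    case False
    then have "mu (\<rho> i) (\<rho> j) \<preceq> mu (\<rho> i) (val t)"
      using V by (simp add: mul_var_leq_mul_val)
    then show ?thesis
      by auto
  qed
next
  case (Pl s1 s2)
  consider k where "mu (\<rho> k) (\<rho> j) \<preceq> mu (val s1) (val t)"
    | k where "mu (\<rho> k) (\<rho> j) \<preceq> mu (val s2) (val t)"
    using Pl.IH[of t] Pl.prems by auto
  then show ?case
    by cases (fastforce simp: distrib_right intro: leq_add1 leq_add2)+
next
  case (Tm s1 s2)
  obtain k where "mu (\<rho> k) (\<rho> j) \<preceq> mu (val s1) (val (Tm s2 t))"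
    using Tm.IH(1)[of "Tm s2 t"] Tm.prems by auto
  then show ?case
    by (auto simp: mul_assoc)
qed

lemma prod_head_square_leq_val: "h \<in> prod_heads p \<Longrightarrow> mu (\<rho> h) (\<rho> h) \<preceq> val p"
  by (induction p) (auto simp: head_square_leq_val_mul leq_add1 leq_add2)

lemma prod_var_leq_val: "j \<in> prod_vars p \<Longrightarrow> \<exists>k. mu (\<rho> k) (\<rho> j) \<preceq> val p"
proof (induction p)
  case (Pl s t)
  then consider k where "mu (\<rho> k) (\<rho> j) \<preceq> val s" | k where "mu (\<rho> k) (\<rho> j) \<preceq> val t"
    by auto
  then show ?case
    by cases (fastforce intro: leq_add1 leq_add2)+
qed (simp_all add: var_mul_leq_val_mul)

lemma lead_var_leq_val: "h \<in> lead_vars p \<Longrightarrow> \<exists>k. mu (\<rho> h) (\<rho> k) \<preceq> val p"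
  unfolding lead_vars_def
proof (elim UnE IntE)
  assume "h \<in> prod_heads p"
  then show ?thesis
    using prod_head_square_leq_val by blast
next
  assume "h \<in> sum_vars p" "h \<in> prod_vars p"
  then obtain k where "mu (\<rho> k) (\<rho> h) \<preceq> val p" "\<rho> h \<preceq> val p"
    using prod_var_leq_val sum_var_leq_val by blast
  then have "mu (\<rho> h) (\<rho> k) \<preceq> val p"
    by (simp add: mul_swap_leq)
  then show ?thesis ..
qed

lemma lead_prod_var_leq_val:
  assumes "h \<in> lead_vars p" "j \<in> prod_vars p"
  shows "mu (\<rho> h) (\<rho> j) \<preceq> val p"
proof -
  obtain k k' where "mu (\<rho> h) (\<rho> k) \<preceq> val p" "mu (\<rho> k') (\<rho> j) \<preceq> val p"
    using lead_var_leq_val[OF assms(1)] prod_var_leq_val[OF assms(2)] by blast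
  then show ?thesis
    using mul_leq_splice[of "\<rho> h" "\<rho> k" "\<rho> k'" "\<rho> j" "val p"] by simp
qed

lemma mul_val_leqI:
  "x \<in> A \<Longrightarrow> X \<in> A \<Longrightarrow> (\<And>j. j \<in> vars t \<Longrightarrow> mu x (\<rho> j) \<preceq> X) \<Longrightarrow> mu x (val t) \<preceq> X"
proof (induction t)
  case (Pl s t)
  then show ?case
    by (simp add: distrib_left add_leqI)
next
  case (Tm s t)
  then have "mu (mu x (val s)) (val t) \<preceq> X"
    using leq_trans[OF _ _ _ mul_mul_leq_add add_leqI] by simp
  then show ?case
    using Tm.prems by (simp add: mul_assoc)
qed simp

lemma val_mul_val_leqI:
  "X \<in> A \<Longrightarrow> (\<And>h j. h \<in> head_vars s \<Longrightarrow> j \<in> vars s \<union> vars t \<Longrightarrow> mu (\<rho> h) (\<rho> j) \<preceq> X) \<Longrightarrow>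
    mu (val s) (val t) \<preceq> X"
proof (induction s arbitrary: t)
  case (V i)
  then show ?case
    by (simp add: mul_val_leqI)
next
  case (Pl s1 s2)
  have "mu (val s1) (val t) \<preceq> X" "mu (val s2) (val t) \<preceq> X"
    by (rule Pl.IH; use Pl.prems in auto)+
  then show ?case
    using Pl.prems by (simp add: distrib_right add_leqI)
next
  case (Tm s1 s2)
  have "mu (val s1) (val (Tm s2 t)) \<preceq> X"
    by (rule Tm.IH(1)) (use Tm.prems in auto)
  then show ?case
    by (simp add: mul_assoc)
qed

lemma val_leq_if_shape_leq: "shape_leq q p \<Longrightarrow> val q \<preceq> val p"
proof (induction q)
  case (V i)
  then have "i \<in> lead_vars p \<or> i \<in> sum_vars p"
    by (auto simp: shape_leq_def)
  then show ?case
  proof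
    assume "i \<in> lead_vars p"
    then obtain k where k: "mu (\<rho> i) (\<rho> k) \<preceq> val p"
      using lead_var_leq_val by blast
    have "\<rho> i \<preceq> mu (\<rho> i) (\<rho> k)"
      by (simp add: leq_mul)
    then have "\<rho> i \<preceq> val p"
      by (rule leq_trans[OF _ _ _ _ k, rotated 3]) simp_all
    then show ?case
      by simp
  qed (simp add: sum_var_leq_val)
next
  case (Pl s t)
  have "shape_leq s p" "shape_leq t p"
    using Pl.prems by (auto simp: shape_leq_def)
  then show ?case
    using Pl.IH by (simp add: add_leqI)
next
  case (Tm s t)
  then have "head_vars s \<subseteq> lead_vars p" "vars s \<union> vars t \<subseteq> prod_vars p"
    by (auto simp: shape_leq_def)
  then have "mu (val s) (val t) \<preceq> val p"
    by (intro val_mul_val_leqI lead_prod_var_leq_val) auto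
  then show ?case
    by simp
qed

lemma val_eq_if_shape_eq: "shape p = shape q \<Longrightarrow> val p = val q"
  using lead_vars_subset_prod_vars[of p] lead_vars_subset_prod_vars[of q]
  by (intro leq_antisym val_leq_if_shape_leq) (auto simp: shape_def shape_leq_def lead_vars_def)

end

lemma sat_if_sat_S: "sat S_car S_add S_mul p q \<Longrightarrow> sat A ad mu p q"
  unfolding sat_def[of A] using shape_eq_if_sat_S val_eq_if_shape_eq by blast

end

lemma sigma_model_if_sat_Sigma_ids:
  assumes ai: "ai_semiring A ad mu" and sigma: "\<forall>(p, q) \<in> Sigma_ids. sat A ad mu p q"
  shows "sigma_model A ad mu"
proof -
  interpret ai_semiring_on A ad mu
    using ai by (simp add: ai_semiring_on_iff)
  have Sigma_instance: "eval ad mu \<rho> p = eval ad mu \<rho> q" if "(p, q) \<in> Sigma_ids" "\<And>i. \<rho> i \<in> A" for p q \<rho>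
    using sigma that by (auto intro: satD)
  show ?thesis
  proof unfold_locales
    fix x y z
    assume "x \<in> A" "y \<in> A" "z \<in> A"
    define \<rho> where "\<rho> i = (if i = 0 then x else if i = 5 then y else z)" for i :: nat
    have xyz: "\<rho> i \<in> A" for i
      using \<open>x \<in> A\<close> \<open>y \<in> A\<close> \<open>z \<in> A\<close> by (simp add: \<rho>_def)
    show "mu (mu x x) y = mu x y"
      using Sigma_instance[of "Tm (Tm vx vx) vy" "Tm vx vy" \<rho>, OF _ xyz] by (simp add: Sigma_ids_def \<rho>_def)
    show "mu (mu x y) z = mu (mu x z) y"
      using Sigma_instance[of "Tm (Tm vx vy) vz" "Tm (Tm vx vz) vy" \<rho>, OF _ xyz] by (simp add: Sigma_ids_def \<rho>_def)
    show "mu x y = ad (mu x y) x"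
      using Sigma_instance[of "Tm vx vy" "Pl (Tm vx vy) vx" \<rho>, OF _ xyz] by (simp add: Sigma_ids_def \<rho>_def)
    show "ad x (mu y x) = ad (mu y x) (mu x y)"
      using Sigma_instance[of "Pl vx (Tm vy vx)" "Pl (Tm vy vx) (Tm vx vy)" \<rho>, OF _ xyz] by (simp add: Sigma_ids_def \<rho>_def)
  next
    fix a b c d
    assume "a \<in> A" "b \<in> A" "c \<in> A" "d \<in> A"
    define \<rho> where "\<rho> i = (if i = 1 then a else if i = 2 then b else if i = 3 then c else d)" for i :: nat
    have "\<rho> i \<in> A" for i
      using \<open>a \<in> A\<close> \<open>b \<in> A\<close> \<open>c \<in> A\<close> \<open>d \<in> A\<close> by (simp add: \<rho>_def)
    from Sigma_instance[of "Pl (Tm x1 x2) (Tm x3 x4)" "Pl (Pl (Tm x1 x2) (Tm x3 x4)) (Tm (Tm (Tm x1 x2) x3) x4)" \<rho>, OF _ this]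
    show "ad (mu a b) (mu c d) = ad (ad (mu a b) (mu c d)) (mu (mu (mu a b) c) d)"
      by (simp add: Sigma_ids_def \<rho>_def)
  qed
qed

theorem proposition6p2:
  fixes A :: "'a set" and ad mu :: "'a \<Rightarrow> 'a \<Rightarrow> 'a"
  shows "in_VS A ad mu \<longleftrightarrow>
           (ai_semiring A ad mu \<and> (\<forall>(p, q) \<in> Sigma_ids. sat A ad mu p q))"
proof
  assume "in_VS A ad mu"
  then have closed: "closed_alg A ad mu"
    and S_ids: "\<And>p q. sat S_car S_add S_mul p q \<Longrightarrow> sat A ad mu p q"
    by (auto simp: in_VS_def)
  have "ai_semiring A ad mu"
    using S_ai_semiring closed S_ids by (auto simp: ai_semiring_iff_sat_ai_semiring_ids)
  moreover have "\<forall>(p, q) \<in> Sigma_ids. sat A ad mu p q"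
    using S_sat_Sigma_ids S_ids by blast
  ultimately show "ai_semiring A ad mu \<and> (\<forall>(p, q) \<in> Sigma_ids. sat A ad mu p q)" ..
next
  assume "ai_semiring A ad mu \<and> (\<forall>(p, q) \<in> Sigma_ids. sat A ad mu p q)"
  then interpret sigma_model A ad mu
    by (blast intro: sigma_model_if_sat_Sigma_ids)
  show "in_VS A ad mu"
    by (auto simp: in_VS_def closed_alg_def intro: sat_if_sat_S)
qed

end
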